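(* Let $f$ be a probability density on $(x_i,x_f)$, $-\infty<x_i<x_f\le\infty$, differentiable with $f'(x)<0$ on $(x_i,x_f)$, and let $\kappa>0$. If $\alpha\in\mathbb{R}\setminus\{2\}$, then $\mathcal{D}_\alpha[f^{[\kappa]}](s)=\big(\mathcal{D}_\alpha[f]\big)^{[\kappa^{\alpha-2}]}(s)$. If $\alpha=2$, then $\mathcal{D}_2[f^{[\kappa]}](s)=\mathcal{D}_2[f](s+\ln\kappa)$.
   Context: For $\kappa>0$ and a function $h$, $h^{[\kappa]}(x)=\kappa\,h(\kappa x)$. Down transform: for a density $f$ on $(x_i,x_f)$ with $f'<0$ and $\alpha\in\mathbb{R}$, $\mathcal{D}_\alpha[f](s)=f(x(s))^\alpha\,|f'(x(s))|^{-1}$, where $x(s)$ is the inverse of the change of variable $s(x)=f(x)^{2-\alpha}/(\alpha-2)$ if $\alpha\neq2$, and $s(x)=-\ln f(x)$ if $\alpha=2$ (in both cases $s'(x)=f^{1-\alpha}(x)|f'(x)|$). *)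

theory Defs
  imports "HOL-Analysis.Analysis"
begin

definition rescale :: "real \<Rightarrow> (real \<Rightarrow> real) \<Rightarrow> real \<Rightarrow> real" where
  "rescale \<kappa> h x = \<kappa> * h (\<kappa> * x)"

definition down_var :: "real \<Rightarrow> (real \<Rightarrow> real) \<Rightarrow> real \<Rightarrow> real" where
  "down_var \<alpha> f x = (if \<alpha> = 2 then - ln (f x) else f x powr (2 - \<alpha>) / (\<alpha> - 2))"

definition down_transform :: "real \<Rightarrow> (real \<Rightarrow> real) \<Rightarrow> real set \<Rightarrow> real \<Rightarrow> real" where
  "down_transform \<alpha> f I s =
     (let x = inv_into I (down_var \<alpha> f) s in f x powr \<alpha> / \<bar>deriv f x\<bar>)"

definition ivl :: "real \<Rightarrow> ereal \<Rightarrow> real set" where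
  "ivl a b = {x. a < x \<and> ereal x < b}"

end

theory Submission
  imports Defs
begin

text \<open>Rescaling multiplies \<open>f\<close> by \<open>\<kappa>\<close> and \<open>f'\<close> by \<open>\<kappa>\<^sup>2\<close>, and turns the change of variable
  \<open>s\<close> into \<open>y \<mapsto> \<kappa>\<^bsup>2-\<alpha>\<^esup> s(\<kappa> y)\<close> for \<open>\<alpha> \<noteq> 2\<close>, resp. \<open>y \<mapsto> s(\<kappa> y) - ln \<kappa>\<close> for \<open>\<alpha> = 2\<close>.
  Since \<open>f' < 0\<close> makes \<open>f\<close>, and hence \<open>s\<close>, injective on the support, the point \<open>y\<close> with
  \<open>s\<^sub>\<kappa>(y) = s\<close> satisfies \<open>\<kappa> y = x(\<kappa>\<^bsup>\<alpha>-2\<^esup> s)\<close>, resp. \<open>\<kappa> y = x(s + ln \<kappa>)\<close>, and \<open>f\<^sup>\<alpha>/|f'|\<close> picks up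
  the factor \<open>\<kappa>\<^sup>\<alpha>/\<kappa>\<^sup>2\<close>. Only the signs of \<open>f\<close> and \<open>f'\<close> matter.\<close>

lemma ereal_less_divide_pos_iff:
  fixes x :: ereal and k y :: real
  assumes "k > 0"
  shows "ereal y < x / ereal k \<longleftrightarrow> ereal (k * y) < x"
  using assms
proof (cases x)
  case (real r)
  then show ?thesis using assms by (simp add: pos_less_divide_eq mult.commute)
qed auto

lemma ivl_divide_eq_vimage:
  assumes "k > 0"
  shows "ivl (a / k) (b / ereal k) = (\<lambda>y. k * y) -` ivl a b"
  using assms by (auto simp: ivl_def ereal_less_divide_pos_iff pos_divide_less_eq mult.commute)

lemma convex_ivl: "convex (ivl a b)"
  unfolding is_interval_convex_1[symmetric] is_interval_1 ivl_def
  by clarsimp (meson ereal_less_eq(3) le_less_trans)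

lemma ivl_exists_greater:
  assumes "x \<in> ivl a b"
  obtains z where "z \<in> ivl a b" "x < z"
proof -
  from assms obtain z where "x < z" "ereal z < b"
    unfolding ivl_def by (metis ereal_dense2 less_ereal.simps(1) mem_Collect_eq order.strict_trans)
  with assms show thesis by (intro that[of z]) (auto simp: ivl_def)
qed

lemma strict_antimono_on_if_deriv_neg:
  fixes f :: "real \<Rightarrow> real"
  assumes "convex I"
    and "\<forall>x\<in>I. f differentiable (at x)" and "\<forall>x\<in>I. deriv f x < 0"
  shows "strict_antimono_on I f"
proof (rule monotone_onI)
  fix a b assume "a \<in> I" "b \<in> I" "a < b"
  show "f b < f a"
  proof (rule DERIV_neg_imp_decreasing[OF \<open>a < b\<close>])
    fix x assume "a \<le> x" "x \<le> b"
    with \<open>a \<in> I\<close> \<open>b \<in> I\<close> \<open>convex I\<close> have "x \<in> I"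
      by (metis is_interval_1 is_interval_convex_1)
    then show "\<exists>y. DERIV f x :> y \<and> y < 0"
      using assms by (metis DERIV_deriv_iff_real_differentiable)
  qed
qed

lemma inj_on_down_var:
  assumes "inj_on f I" and "\<forall>x\<in>I. 0 < f x"
  shows "inj_on (down_var \<alpha> f) I"
proof (rule inj_onI)
  fix x x' assume x: "x \<in> I" "x' \<in> I" and eq: "down_var \<alpha> f x = down_var \<alpha> f x'"
  have "f x = f x'"
  proof (cases "\<alpha> = 2")
    case True
    with eq x assms(2) show ?thesis by (simp add: down_var_def)
  next
    case False
    with eq have "(f x powr (2 - \<alpha>)) powr (1 / (2 - \<alpha>)) = (f x' powr (2 - \<alpha>)) powr (1 / (2 - \<alpha>))"
      by (simp add: down_var_def)
    with False x assms(2) show ?thesis by (simp add: powr_powr abs_of_pos)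
  qed
  with x assms(1) show "x = x'" by (meson inj_onD)
qed

lemma down_transform_down_var:
  assumes "inj_on (down_var \<alpha> f) I" and "x \<in> I"
  shows "down_transform \<alpha> f I (down_var \<alpha> f x) = f x powr \<alpha> / \<bar>deriv f x\<bar>"
  using assms by (simp add: down_transform_def)

lemma deriv_rescale:
  assumes "f differentiable (at (\<kappa> * x))"
  shows "deriv (rescale \<kappa> f) x = \<kappa>\<^sup>2 * deriv f (\<kappa> * x)"
proof -
  from assms have "DERIV f (\<kappa> * x) :> deriv f (\<kappa> * x)"
    by (simp add: DERIV_deriv_iff_real_differentiable)
  then have "DERIV (\<lambda>y. f (\<kappa> * y)) x :> deriv f (\<kappa> * x) * \<kappa>"
    by (rule DERIV_chain2) (auto intro!: derivative_eq_intros)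
  then have "DERIV (rescale \<kappa> f) x :> \<kappa> * (deriv f (\<kappa> * x) * \<kappa>)"
    unfolding rescale_def by (rule DERIV_cmult)
  then show ?thesis by (simp add: DERIV_imp_deriv power2_eq_square)
qed

lemma down_var_rescale:
  assumes "\<kappa> > 0" and "f (\<kappa> * x) > 0" and "\<alpha> \<noteq> 2"
  shows "down_var \<alpha> (rescale \<kappa> f) x = \<kappa> powr (2 - \<alpha>) * down_var \<alpha> f (\<kappa> * x)"
  using assms by (simp add: down_var_def rescale_def powr_mult)

lemma down_var_2_rescale:
  assumes "\<kappa> > 0" and "f (\<kappa> * x) > 0"
  shows "down_var 2 (rescale \<kappa> f) x = down_var 2 f (\<kappa> * x) - ln \<kappa>"
  using assms by (simp add: down_var_def rescale_def ln_mult)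

lemma down_transform_rescale_down_var:
  fixes f :: "real \<Rightarrow> real"
  assumes "\<kappa> > 0" and "inj_on f I" and "\<forall>x\<in>I. 0 < f x"
    and "\<forall>x\<in>I. f differentiable (at x)" and "\<kappa> * y \<in> I"
  shows "down_transform \<alpha> (rescale \<kappa> f) ((\<lambda>y. \<kappa> * y) -` I) (down_var \<alpha> (rescale \<kappa> f) y)
    = \<kappa> powr (\<alpha> - 2) * down_transform \<alpha> f I (down_var \<alpha> f (\<kappa> * y))"
proof -
  let ?J = "(\<lambda>y. \<kappa> * y) -` I"
  have "inj_on (rescale \<kappa> f) ?J"
  proof (rule inj_onI)
    fix x x' assume "x \<in> ?J" "x' \<in> ?J" "rescale \<kappa> f x = rescale \<kappa> f x'"
    with assms(1,2) have "\<kappa> * x = \<kappa> * x'" by (auto simp: rescale_def dest: inj_onD)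
    with assms(1) show "x = x'" by simp
  qed
  moreover have "\<forall>y\<in>?J. 0 < rescale \<kappa> f y"
    using assms(1,3) by (simp add: rescale_def)
  ultimately have "inj_on (down_var \<alpha> (rescale \<kappa> f)) ?J"
    by (rule inj_on_down_var)
  then have "down_transform \<alpha> (rescale \<kappa> f) ?J (down_var \<alpha> (rescale \<kappa> f) y)
      = (\<kappa> * f (\<kappa> * y)) powr \<alpha> / (\<kappa>\<^sup>2 * \<bar>deriv f (\<kappa> * y)\<bar>)"
    using assms by (simp add: down_transform_down_var deriv_rescale rescale_def abs_mult)
  also have "\<dots> = \<kappa> powr (\<alpha> - 2) * (f (\<kappa> * y) powr \<alpha> / \<bar>deriv f (\<kappa> * y)\<bar>)"
    using assms(1,3,5) by (simp add: powr_mult powr_diff)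
  also have "\<dots> = \<kappa> powr (\<alpha> - 2) * down_transform \<alpha> f I (down_var \<alpha> f (\<kappa> * y))"
    using assms(2,3,5) by (simp add: down_transform_down_var inj_on_down_var)
  finally show ?thesis .
qed

theorem proposition1:
  fixes f :: "real \<Rightarrow> real" and x\<^sub>i :: real and x\<^sub>f :: ereal and \<kappa> \<alpha> :: real
  assumes "ereal x\<^sub>i < x\<^sub>f"
    and nonneg: "\<forall>x\<in>ivl x\<^sub>i x\<^sub>f. 0 \<le> f x"
    and density: "(f has_integral 1) (ivl x\<^sub>i x\<^sub>f)"
    and diff: "\<forall>x\<in>ivl x\<^sub>i x\<^sub>f. f differentiable (at x)"
    and decr: "\<forall>x\<in>ivl x\<^sub>i x\<^sub>f. deriv f x < 0"
    and "\<kappa> > 0"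
  shows "(\<alpha> \<noteq> 2 \<longrightarrow>
            (\<forall>s \<in> down_var \<alpha> (rescale \<kappa> f) ` ivl (x\<^sub>i / \<kappa>) (x\<^sub>f / ereal \<kappa>).
               down_transform \<alpha> (rescale \<kappa> f) (ivl (x\<^sub>i / \<kappa>) (x\<^sub>f / ereal \<kappa>)) s
               = rescale (\<kappa> powr (\<alpha> - 2)) (down_transform \<alpha> f (ivl x\<^sub>i x\<^sub>f)) s))
       \<and> (\<alpha> = 2 \<longrightarrow>
            (\<forall>s \<in> down_var 2 (rescale \<kappa> f) ` ivl (x\<^sub>i / \<kappa>) (x\<^sub>f / ereal \<kappa>).
               down_transform 2 (rescale \<kappa> f) (ivl (x\<^sub>i / \<kappa>) (x\<^sub>f / ereal \<kappa>)) s
               = down_transform 2 f (ivl x\<^sub>i x\<^sub>f) (s + ln \<kappa>)))"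
proof -
  define I where "I = ivl x\<^sub>i x\<^sub>f"
  have J: "ivl (x\<^sub>i / \<kappa>) (x\<^sub>f / ereal \<kappa>) = (\<lambda>y. \<kappa> * y) -` I"
    unfolding I_def using \<open>\<kappa> > 0\<close> by (rule ivl_divide_eq_vimage)
  have anti: "strict_antimono_on I f"
    unfolding I_def using convex_ivl diff decr by (rule strict_antimono_on_if_deriv_neg)
  then have inj: "inj_on f I"
    by (simp add: strict_antimono_iff_antimono)
  have pos: "\<forall>x\<in>I. 0 < f x"
  proof
    fix x assume "x \<in> I"
    then obtain z where "z \<in> I" "x < z" unfolding I_def by (rule ivl_exists_greater)
    have "f z < f x" using monotone_onD[OF anti \<open>x \<in> I\<close> \<open>z \<in> I\<close> \<open>x < z\<close>] by simp
    moreover have "0 \<le> f z" using nonneg \<open>z \<in> I\<close> unfolding I_def by blast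
    ultimately show "0 < f x" by linarith
  qed
  note transform = down_transform_rescale_down_var[OF \<open>\<kappa> > 0\<close> inj pos diff[folded I_def]]
  show ?thesis
    unfolding J I_def[symmetric]
  proof (intro conjI impI ballI)
    fix s assume "\<alpha> \<noteq> 2" "s \<in> down_var \<alpha> (rescale \<kappa> f) ` ((\<lambda>y. \<kappa> * y) -` I)"
    then obtain y where y: "\<kappa> * y \<in> I" and s: "s = down_var \<alpha> (rescale \<kappa> f) y" by auto
    have "down_var \<alpha> f (\<kappa> * y) = \<kappa> powr (\<alpha> - 2) * s"
      using s y pos \<open>\<kappa> > 0\<close> \<open>\<alpha> \<noteq> 2\<close>
      by (simp add: down_var_rescale mult.assoc[symmetric] powr_add[symmetric])
    with transform[OF y] s show "down_transform \<alpha> (rescale \<kappa> f) ((\<lambda>y. \<kappa> * y) -` I) s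
        = rescale (\<kappa> powr (\<alpha> - 2)) (down_transform \<alpha> f I) s"
      by (simp add: rescale_def)
  next
    fix s assume "s \<in> down_var 2 (rescale \<kappa> f) ` ((\<lambda>y. \<kappa> * y) -` I)"
    then obtain y where y: "\<kappa> * y \<in> I" and s: "s = down_var 2 (rescale \<kappa> f) y" by auto
    have "down_var 2 f (\<kappa> * y) = s + ln \<kappa>"
      using s y pos \<open>\<kappa> > 0\<close> by (simp add: down_var_2_rescale)
    with transform[OF y, of 2] s \<open>\<kappa> > 0\<close> show "down_transform 2 (rescale \<kappa> f) ((\<lambda>y. \<kappa> * y) -` I) s
        = down_transform 2 f I (s + ln \<kappa>)"
      by simp
  qed
qed

end
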